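(* Let $(A,A^* )$ be a left-symmetric bialgebroid, let $(A\oplus A^*,\star,\rho,(\cdot,\cdot)_-)$ be the associated pre-symplectic algebroid (with $\star$, $\rho$, $(\cdot,\cdot)_-$ as below), let $H\in\Gamma(A\otimes A)$, $H^\sharp:A^*\to A$ given by $\langle H^\sharp\xi,\eta\rangle=H(\xi,\eta)$, and let $G_H=\{H^\sharp(\xi)+\xi:\xi\in A^*\}$ be its graph. Then $G_H$ is a Dirac structure of $(A\oplus A^*,\star,\rho,(\cdot,\cdot)_-)$ if and only if $H\in\Gamma(\mathrm{Sym}^2(A))$ and $$\delta_*H-\llbracket H,H\rrbracket=0,$$ where $H\in\Gamma(A\otimes A)$ is regarded as a 2-cochain of the left-symmetric algebroid $A^*$.
   Context: A left-symmetric algebroid is a vector bundle $A\to M$ with an $\mathbb R$-bilinear multiplication $\cdot_A$ on $\Gamma(A)$ with $x\cdot_A(y\cdot_Az)-(x\cdot_Ay)\cdot_Az$ symmetric in $x,y$, and an anchor $a_A$ with $x\cdot_A(fy)=f(x\cdot_Ay)+a_A(x)(f)y$, $(fx)\cdot_Ay=f(x\cdot_Ay)$; $[x,y]_A=x\cdot_Ay-y\cdot_Ax$; $d$ the differential of $(A,[\cdot,\cdot]_A,a_A)$; $\langle\mathcal L_x\xi,y\rangle=a_A(x)\langle\xi,y\rangle-\langle\xi,[x,y]_A\rangle$, $\langle R_x\xi,y\rangle=-\langle\xi,y\cdot_Ax\rangle$; analogous $[\cdot,\cdot]_{A^*}$, $d_*$ ($\langle d_*f,\xi\rangle=a_{A^*}(\xi)f$),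 $\mathcal L_\xi x$, $\langle R_\xi x,\eta\rangle=-\langle x,\eta\cdot_{A^*}\xi\rangle$ for $A^*$. Coboundary of $A$: $C^{n+1}(A)=\Gamma(\wedge^nA^*\otimes A^* )$, $\delta\varphi(x_1,\dots,x_{n+1})=\sum_{i=1}^n(-1)^{i+1}a_A(x_i)\varphi(\dots,\hat{x_i},\dots,x_{n+1})-\sum_{i=1}^n(-1)^{i+1}\varphi(\dots,\hat{x_i},\dots,x_n,x_i\cdot_Ax_{n+1})+\sum_{i<j\le n}(-1)^{i+j}\varphi([x_i,x_j]_A,\dots,\hat{x_i},\dots,\hat{x_j},\dots,x_{n+1})$; $\delta_*$ is the same for $A^*$ (acting on $\Gamma(\wedge^nA\otimes A)$). $\mathfrak L_x(y_1\otimes y_2)=(x\cdot_Ay_1)\otimes y_2+y_1\otimes[x,y_2]_A$, similarly $\mathfrak L_\xi$. $(A,A^* )$ is a left-symmetric bialgebroid if $\delta[\xi,\eta]_{A^*}=\mathfrak L_\xi\delta\eta-\mathfrak L_\eta\delta\xi$ and $\delta_*[x,y]_A=\mathfrak L_x\delta_*y-\mathfrak L_y\delta_*x$. The associated structure on $A\oplus A^*$: $e_1\star e_2=(x_1\cdot_Ax_2+\mathcal L_{\xi_1}x_2-R_{\xi_2}x_1-\frac12d_*(e_1,e_2)_+)+(\xi_1\cdot_{A^*}\xi_2+\mathcal L_{x_1}\xi_2-R_{x_2}\xi_1-\frac12d(e_1,e_2)_+)$ for $e_i=x_i+\xi_i$; $\rho(x+\xi)=a_A(x)+a_{A^*}(\xi)$;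 $(x+\xi,y+\eta)_\pm=\langle\xi,y\rangle\pm\langle\eta,x\rangle$. A Dirac structure is a subbundle maximal isotropic for $(\cdot,\cdot)_-$ whose sections are closed under $\star$. For $H\in\Gamma(\mathrm{Sym}^2(A))$ (symmetric elements of $A\otimes A$), $\llbracket H,H\rrbracket\in\Gamma(\wedge^2A\otimes A)$ is $\llbracket H,H\rrbracket(\xi_1,\xi_2,\xi_3)=a_A(H^\sharp\xi_1)\langle H^\sharp\xi_2,\xi_3\rangle-a_A(H^\sharp\xi_2)\langle H^\sharp\xi_1,\xi_3\rangle+\langle\xi_1,H^\sharp\xi_2\cdot_AH^\sharp\xi_3\rangle-\langle\xi_2,H^\sharp\xi_1\cdot_AH^\sharp\xi_3\rangle-\langle\xi_3,[H^\sharp\xi_1,H^\sharp\xi_2]_A\rangle$. *)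

theory Defs
  imports Main "HOL.Real_Vector_Spaces"
begin

text \<open>Algebraic (section-level) model of a pair of vector bundles A, A* over M.
  'f plays the role of the commutative real algebra of smooth functions on M,
  'a the module of sections of A, 'b the module of sections of A*.\<close>

record ('f, 'a, 'b) lsb_data =
  smA   :: "'f \<Rightarrow> 'a \<Rightarrow> 'a"
  smB   :: "'f \<Rightarrow> 'b \<Rightarrow> 'b"
  dpair :: "'b \<Rightarrow> 'a \<Rightarrow> 'f"
  mulA  :: "'a \<Rightarrow> 'a \<Rightarrow> 'a"
  ancA  :: "'a \<Rightarrow> 'f \<Rightarrow> 'f"
  mulB  :: "'b \<Rightarrow> 'b \<Rightarrow> 'b"
  ancB  :: "'b \<Rightarrow> 'f \<Rightarrow> 'f"

definition fmodule :: "('f::comm_ring_1 \<Rightarrow> 'a::ab_group_add \<Rightarrow> 'a) \<Rightarrow> bool" where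
  "fmodule sm \<longleftrightarrow>
     (\<forall>f g x. sm (f + g) x = sm f x + sm g x) \<and>
     (\<forall>f x y. sm f (x + y) = sm f x + sm f y) \<and>
     (\<forall>f g x. sm (f * g) x = sm f (sm g x)) \<and>
     (\<forall>x. sm 1 x = x)"

definition flinear :: "('f::comm_ring_1 \<Rightarrow> 'a::ab_group_add \<Rightarrow> 'a) \<Rightarrow> ('a \<Rightarrow> 'f) \<Rightarrow> bool" where
  "flinear sm \<phi> \<longleftrightarrow> (\<forall>x y. \<phi> (x + y) = \<phi> x + \<phi> y) \<and> (\<forall>f x. \<phi> (sm f x) = f * \<phi> x)"

text \<open>A* is the dual of A: the pairing is C-infinity-bilinear, nondegenerate, and
  every C-infinity-linear functional on either side is represented (as is the case
  for sections of a finite-rank vector bundle and its dual).\<close>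
definition dual_pairing :: "('f::{comm_ring_1,real_algebra_1}, 'a::ab_group_add, 'b::ab_group_add, 'z) lsb_data_scheme \<Rightarrow> bool" where
  "dual_pairing S \<longleftrightarrow>
     (\<forall>\<xi> \<eta> x. dpair S (\<xi> + \<eta>) x = dpair S \<xi> x + dpair S \<eta> x) \<and>
     (\<forall>\<xi> x y. dpair S \<xi> (x + y) = dpair S \<xi> x + dpair S \<xi> y) \<and>
     (\<forall>f \<xi> x. dpair S (smB S f \<xi>) x = f * dpair S \<xi> x) \<and>
     (\<forall>f \<xi> x. dpair S \<xi> (smA S f x) = f * dpair S \<xi> x) \<and>
     (\<forall>\<xi>. (\<forall>x. dpair S \<xi> x = 0) \<longrightarrow> \<xi> = 0) \<and>
     (\<forall>x. (\<forall>\<xi>. dpair S \<xi> x = 0) \<longrightarrow> x = 0) \<and>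
     (\<forall>\<phi>. flinear (smA S) \<phi> \<longrightarrow> (\<exists>\<xi>. \<forall>x. dpair S \<xi> x = \<phi> x)) \<and>
     (\<forall>\<psi>. flinear (smB S) \<psi> \<longrightarrow> (\<exists>x. \<forall>\<xi>. dpair S \<xi> x = \<psi> \<xi>))"

text \<open>The anchor is a bundle map into TM:
  C-infinity-linear in its argument, with values real-linear derivations of 'f.\<close>
definition ls_algebroid ::
  "('f::{comm_ring_1,real_algebra_1} \<Rightarrow> 'a::ab_group_add \<Rightarrow> 'a) \<Rightarrow> ('a \<Rightarrow> 'a \<Rightarrow> 'a) \<Rightarrow> ('a \<Rightarrow> 'f \<Rightarrow> 'f) \<Rightarrow> bool" where
  "ls_algebroid sm m a \<longleftrightarrow>
     (\<forall>x y z. m x (y + z) = m x y + m x z) \<and>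
     (\<forall>x y z. m (x + y) z = m x z + m y z) \<and>
     (\<forall>c::real. \<forall>x y. m x (sm (of_real c) y) = sm (of_real c) (m x y)) \<and>
     (\<forall>c::real. \<forall>x y. m (sm (of_real c) x) y = sm (of_real c) (m x y)) \<and>
     (\<forall>x y z. m x (m y z) - m (m x y) z = m y (m x z) - m (m y x) z) \<and>
     (\<forall>f x y. m x (sm f y) = sm f (m x y) + sm (a x f) y) \<and>
     (\<forall>f x y. m (sm f x) y = sm f (m x y)) \<and>
     (\<forall>x y f. a (x + y) f = a x f + a y f) \<and>
     (\<forall>g x f. a (sm g x) f = g * a x f) \<and>
     (\<forall>x f g. a x (f + g) = a x f + a x g) \<and>
     (\<forall>x f g. a x (f * g) = a x f * g + f * a x g) \<and>
     (\<forall>x (c::real) f. a x (of_real c * f) = of_real c * a x f)"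

definition repA :: "('f::{comm_ring_1,real_algebra_1}, 'a::ab_group_add, 'b::ab_group_add, 'z) lsb_data_scheme \<Rightarrow> ('b \<Rightarrow> 'f) \<Rightarrow> 'a" where
  "repA S \<psi> = (SOME x. \<forall>\<xi>. dpair S \<xi> x = \<psi> \<xi>)"

definition repB :: "('f::{comm_ring_1,real_algebra_1}, 'a::ab_group_add, 'b::ab_group_add, 'z) lsb_data_scheme \<Rightarrow> ('a \<Rightarrow> 'f) \<Rightarrow> 'b" where
  "repB S \<phi> = (SOME \<xi>. \<forall>x. dpair S \<xi> x = \<phi> x)"

definition brA :: "('f::{comm_ring_1,real_algebra_1}, 'a::ab_group_add, 'b::ab_group_add, 'z) lsb_data_scheme \<Rightarrow> 'a \<Rightarrow> 'a \<Rightarrow> 'a" where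
  "brA S x y = mulA S x y - mulA S y x"

definition brB :: "('f::{comm_ring_1,real_algebra_1}, 'a::ab_group_add, 'b::ab_group_add, 'z) lsb_data_scheme \<Rightarrow> 'b \<Rightarrow> 'b \<Rightarrow> 'b" where
  "brB S \<xi> \<eta> = mulB S \<xi> \<eta> - mulB S \<eta> \<xi>"

definition dA :: "('f::{comm_ring_1,real_algebra_1}, 'a::ab_group_add, 'b::ab_group_add, 'z) lsb_data_scheme \<Rightarrow> 'f \<Rightarrow> 'b" where
  "dA S f = repB S (\<lambda>x. ancA S x f)"

definition dB :: "('f::{comm_ring_1,real_algebra_1}, 'a::ab_group_add, 'b::ab_group_add, 'z) lsb_data_scheme \<Rightarrow> 'f \<Rightarrow> 'a" where
  "dB S f = repA S (\<lambda>\<xi>. ancB S \<xi> f)"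

definition LieA :: "('f::{comm_ring_1,real_algebra_1}, 'a::ab_group_add, 'b::ab_group_add, 'z) lsb_data_scheme \<Rightarrow> 'a \<Rightarrow> 'b \<Rightarrow> 'b" where
  "LieA S x \<xi> = repB S (\<lambda>y. ancA S x (dpair S \<xi> y) - dpair S \<xi> (brA S x y))"

definition RA :: "('f::{comm_ring_1,real_algebra_1}, 'a::ab_group_add, 'b::ab_group_add, 'z) lsb_data_scheme \<Rightarrow> 'a \<Rightarrow> 'b \<Rightarrow> 'b" where
  "RA S x \<xi> = repB S (\<lambda>y. - dpair S \<xi> (mulA S y x))"

definition LieB :: "('f::{comm_ring_1,real_algebra_1}, 'a::ab_group_add, 'b::ab_group_add, 'z) lsb_data_scheme \<Rightarrow> 'b \<Rightarrow> 'a \<Rightarrow> 'a" where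
  "LieB S \<xi> x = repA S (\<lambda>\<eta>. ancB S \<xi> (dpair S \<eta> x) - dpair S (brB S \<xi> \<eta>) x)"

definition RB :: "('f::{comm_ring_1,real_algebra_1}, 'a::ab_group_add, 'b::ab_group_add, 'z) lsb_data_scheme \<Rightarrow> 'b \<Rightarrow> 'a \<Rightarrow> 'a" where
  "RB S \<xi> x = repA S (\<lambda>\<eta>. - dpair S (mulB S \<eta> \<xi>) x)"

definition lamA :: "('f::{comm_ring_1,real_algebra_1}, 'a::ab_group_add, 'b::ab_group_add, 'z) lsb_data_scheme \<Rightarrow> 'a \<Rightarrow> 'b \<Rightarrow> 'b" where
  "lamA S x \<xi> = repB S (\<lambda>y. ancA S x (dpair S \<xi> y) - dpair S \<xi> (mulA S x y))"

definition lamB :: "('f::{comm_ring_1,real_algebra_1}, 'a::ab_group_add, 'b::ab_group_add, 'z) lsb_data_scheme \<Rightarrow> 'b \<Rightarrow> 'a \<Rightarrow> 'a" where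
  "lamB S \<xi> x = repA S (\<lambda>\<eta>. ancB S \<xi> (dpair S \<eta> x) - dpair S (mulB S \<xi> \<eta>) x)"

text \<open>Sections of A*\<otimes>A* are represented as C-infinity-bilinear forms on sections
  of A (T(x1,x2)), sections of A\<otimes>A as bilinear forms on sections of A*.
  frakL_xi (eta1\<otimes>eta2) = (xi.eta1)\<otimes>eta2 + eta1\<otimes>[xi,eta2] then reads
  (frakL_xi T)(x1,x2) = a*(xi)(T(x1,x2)) - T(lamB xi x1, x2) - T(x1, L_xi x2).\<close>
definition frakLB :: "('f::{comm_ring_1,real_algebra_1}, 'a::ab_group_add, 'b::ab_group_add, 'z) lsb_data_scheme \<Rightarrow> 'b \<Rightarrow> ('a \<Rightarrow> 'a \<Rightarrow> 'f) \<Rightarrow> 'a \<Rightarrow> 'a \<Rightarrow> 'f" where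
  "frakLB S \<xi> T x1 x2 = ancB S \<xi> (T x1 x2) - T (lamB S \<xi> x1) x2 - T x1 (LieB S \<xi> x2)"

definition frakLA :: "('f::{comm_ring_1,real_algebra_1}, 'a::ab_group_add, 'b::ab_group_add, 'z) lsb_data_scheme \<Rightarrow> 'a \<Rightarrow> ('b \<Rightarrow> 'b \<Rightarrow> 'f) \<Rightarrow> 'b \<Rightarrow> 'b \<Rightarrow> 'f" where
  "frakLA S x T \<xi>1 \<xi>2 = ancA S x (T \<xi>1 \<xi>2) - T (lamA S x \<xi>1) \<xi>2 - T \<xi>1 (LieA S x \<xi>2)"

definition cobA1 :: "('f::{comm_ring_1,real_algebra_1}, 'a::ab_group_add, 'b::ab_group_add, 'z) lsb_data_scheme \<Rightarrow> 'b \<Rightarrow> 'a \<Rightarrow> 'a \<Rightarrow> 'f" where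
  "cobA1 S \<eta> x1 x2 = ancA S x1 (dpair S \<eta> x2) - dpair S \<eta> (mulA S x1 x2)"

definition cobB1 :: "('f::{comm_ring_1,real_algebra_1}, 'a::ab_group_add, 'b::ab_group_add, 'z) lsb_data_scheme \<Rightarrow> 'a \<Rightarrow> 'b \<Rightarrow> 'b \<Rightarrow> 'f" where
  "cobB1 S y \<xi>1 \<xi>2 = ancB S \<xi>1 (dpair S \<xi>2 y) - dpair S (mulB S \<xi>1 \<xi>2) y"

definition cobB2 :: "('f::{comm_ring_1,real_algebra_1}, 'a::ab_group_add, 'b::ab_group_add, 'z) lsb_data_scheme \<Rightarrow> ('b \<Rightarrow> 'b \<Rightarrow> 'f) \<Rightarrow> 'b \<Rightarrow> 'b \<Rightarrow> 'b \<Rightarrow> 'f" where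
  "cobB2 S H \<xi>1 \<xi>2 \<xi>3 =
     ancB S \<xi>1 (H \<xi>2 \<xi>3) - ancB S \<xi>2 (H \<xi>1 \<xi>3)
     - H \<xi>2 (mulB S \<xi>1 \<xi>3) + H \<xi>1 (mulB S \<xi>2 \<xi>3)
     - H (brB S \<xi>1 \<xi>2) \<xi>3"

definition ls_bialgebroid :: "('f::{comm_ring_1,real_algebra_1}, 'a::ab_group_add, 'b::ab_group_add) lsb_data \<Rightarrow> bool" where
  "ls_bialgebroid S \<longleftrightarrow>
     fmodule (smA S) \<and> fmodule (smB S) \<and> dual_pairing S \<and>
     ls_algebroid (smA S) (mulA S) (ancA S) \<and>
     ls_algebroid (smB S) (mulB S) (ancB S) \<and>
     (\<forall>\<xi> \<eta> x1 x2. cobA1 S (brB S \<xi> \<eta>) x1 x2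
        = frakLB S \<xi> (cobA1 S \<eta>) x1 x2 - frakLB S \<eta> (cobA1 S \<xi>) x1 x2) \<and>
     (\<forall>x y \<xi>1 \<xi>2. cobB1 S (brA S x y) \<xi>1 \<xi>2
        = frakLA S x (cobB1 S y) \<xi>1 \<xi>2 - frakLA S y (cobB1 S x) \<xi>1 \<xi>2)"

text \<open>The structure on A \<oplus> A*, sections being pairs (x, xi) = x + xi.\<close>
definition pform_plus :: "('f::{comm_ring_1,real_algebra_1}, 'a::ab_group_add, 'b::ab_group_add, 'z) lsb_data_scheme \<Rightarrow> 'a \<times> 'b \<Rightarrow> 'a \<times> 'b \<Rightarrow> 'f" where
  "pform_plus S e1 e2 = dpair S (snd e1) (fst e2) + dpair S (snd e2) (fst e1)"

definition pform_minus :: "('f::{comm_ring_1,real_algebra_1}, 'a::ab_group_add, 'b::ab_group_add, 'z) lsb_data_scheme \<Rightarrow> 'a \<times> 'b \<Rightarrow> 'a \<times> 'b \<Rightarrow> 'f" where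
  "pform_minus S e1 e2 = dpair S (snd e1) (fst e2) - dpair S (snd e2) (fst e1)"

definition star :: "('f::{comm_ring_1,real_algebra_1}, 'a::ab_group_add, 'b::ab_group_add, 'z) lsb_data_scheme
    \<Rightarrow> 'a \<times> 'b \<Rightarrow> 'a \<times> 'b \<Rightarrow> 'a \<times> 'b" where
  "star S e1 e2 =
     (mulA S (fst e1) (fst e2) + LieB S (snd e1) (fst e2) - RB S (snd e2) (fst e1)
        - smA S (of_real (1/2)) (dB S (pform_plus S e1 e2)),
      mulB S (snd e1) (snd e2) + LieA S (fst e1) (snd e2) - RA S (fst e2) (snd e1)
        - smB S (of_real (1/2)) (dA S (pform_plus S e1 e2)))"

text \<open>Subbundles are represented by their C-infinity-submodules of sections.\<close>
definition submod :: "('f::{comm_ring_1,real_algebra_1}, 'a::ab_group_add, 'b::ab_group_add, 'z) lsb_data_scheme \<Rightarrow> ('a \<times> 'b) set \<Rightarrow> bool" where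
  "submod S L \<longleftrightarrow> (0, 0) \<in> L \<and> (\<forall>e1\<in>L. \<forall>e2\<in>L. (fst e1 + fst e2, snd e1 + snd e2) \<in> L) \<and>
     (\<forall>f. \<forall>e\<in>L. (smA S f (fst e), smB S f (snd e)) \<in> L)"

definition isotropic_minus :: "('f::{comm_ring_1,real_algebra_1}, 'a::ab_group_add, 'b::ab_group_add, 'z) lsb_data_scheme \<Rightarrow> ('a \<times> 'b) set \<Rightarrow> bool" where
  "isotropic_minus S L \<longleftrightarrow> (\<forall>e1\<in>L. \<forall>e2\<in>L. pform_minus S e1 e2 = 0)"

definition max_isotropic_minus :: "('f::{comm_ring_1,real_algebra_1}, 'a::ab_group_add, 'b::ab_group_add, 'z) lsb_data_scheme \<Rightarrow> ('a \<times> 'b) set \<Rightarrow> bool" where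
  "max_isotropic_minus S L \<longleftrightarrow> submod S L \<and> isotropic_minus S L \<and>
     (\<forall>L'. submod S L' \<and> isotropic_minus S L' \<and> L \<subseteq> L' \<longrightarrow> L' = L)"

definition dirac :: "('f::{comm_ring_1,real_algebra_1}, 'a::ab_group_add, 'b::ab_group_add, 'z) lsb_data_scheme \<Rightarrow> ('a \<times> 'b) set \<Rightarrow> bool" where
  "dirac S L \<longleftrightarrow> max_isotropic_minus S L \<and> (\<forall>e1\<in>L. \<forall>e2\<in>L. star S e1 e2 \<in> L)"

text \<open>H in Gamma(A\<otimes>A) as a C-infinity-bilinear form on sections of A*.\<close>
definition tensorAA :: "('f::{comm_ring_1,real_algebra_1}, 'a::ab_group_add, 'b::ab_group_add, 'z) lsb_data_scheme \<Rightarrow> ('b \<Rightarrow> 'b \<Rightarrow> 'f) \<Rightarrow> bool" where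
  "tensorAA S H \<longleftrightarrow> (\<forall>\<xi>. flinear (smB S) (H \<xi>)) \<and> (\<forall>\<eta>. flinear (smB S) (\<lambda>\<xi>. H \<xi> \<eta>))"

definition hsharp :: "('f::{comm_ring_1,real_algebra_1}, 'a::ab_group_add, 'b::ab_group_add, 'z) lsb_data_scheme \<Rightarrow> ('b \<Rightarrow> 'b \<Rightarrow> 'f) \<Rightarrow> 'b \<Rightarrow> 'a" where
  "hsharp S H \<xi> = repA S (\<lambda>\<eta>. H \<xi> \<eta>)"

definition graphH :: "('f::{comm_ring_1,real_algebra_1}, 'a::ab_group_add, 'b::ab_group_add, 'z) lsb_data_scheme \<Rightarrow> ('b \<Rightarrow> 'b \<Rightarrow> 'f) \<Rightarrow> ('a \<times> 'b) set" where
  "graphH S H = {(hsharp S H \<xi>, \<xi>) | \<xi>. True}"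

definition bigbrHH :: "('f::{comm_ring_1,real_algebra_1}, 'a::ab_group_add, 'b::ab_group_add, 'z) lsb_data_scheme \<Rightarrow> ('b \<Rightarrow> 'b \<Rightarrow> 'f) \<Rightarrow> 'b \<Rightarrow> 'b \<Rightarrow> 'b \<Rightarrow> 'f" where
  "bigbrHH S H \<xi>1 \<xi>2 \<xi>3 =
     ancA S (hsharp S H \<xi>1) (dpair S \<xi>3 (hsharp S H \<xi>2))
     - ancA S (hsharp S H \<xi>2) (dpair S \<xi>3 (hsharp S H \<xi>1))
     + dpair S \<xi>1 (mulA S (hsharp S H \<xi>2) (hsharp S H \<xi>3))
     - dpair S \<xi>2 (mulA S (hsharp S H \<xi>1) (hsharp S H \<xi>3))
     - dpair S \<xi>3 (brA S (hsharp S H \<xi>1) (hsharp S H \<xi>2))"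

end

theory Submission
  imports Defs
begin

text \<open>Write \<open>x + \<xi>\<close> for a section of \<open>A \<oplus> A*\<close>. The graph of \<open>H\<^sup>\<sharp>\<close> is \<open>(\<cdot>,\<cdot>)\<^sub>-\<close>-isotropic exactly when \<open>H\<close> is symmetric, and then it is automatically
  maximal, since an isotropic submodule containing it would contain an element \<open>x + 0\<close> with
  \<open>\<langle>\<eta>, x\<rangle> = 0\<close> for all \<open>\<eta>\<close>. For symmetric \<open>H\<close>, a section \<open>x + \<xi>\<close> lies on the graph iff
  \<open>\<langle>\<theta>, x\<rangle> - \<langle>\<xi>, H\<^sup>\<sharp>\<theta>\<rangle>\<close> vanishes for all \<open>\<theta>\<close>, and expanding the product
  \<open>(H\<^sup>\<sharp>\<xi> + \<xi>) \<star> (H\<^sup>\<sharp>\<eta> + \<eta>)\<close> shows that this quantity equals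
  \<open>(\<delta>\<^sub>*H - \<lbrakk>H,H\<rbrakk>)(\<xi>, \<theta>, \<eta>)\<close>. Only the algebroid structures of \<open>A\<close> and \<open>A*\<close> and the
  duality enter.\<close>

lemma ls_algebroidD:
  assumes "ls_algebroid sm m a"
  shows ls_algebroid_mult_add_right: "m x (y + z) = m x y + m x z"
    and ls_algebroid_mult_add_left: "m (x + y) z = m x z + m y z"
    and ls_algebroid_mult_scale_right: "m x (sm f y) = sm f (m x y) + sm (a x f) y"
    and ls_algebroid_mult_scale_left: "m (sm f x) y = sm f (m x y)"
    and ls_algebroid_anchor_add: "a (x + y) f = a x f + a y f"
    and ls_algebroid_anchor_scale: "a (sm g x) f = g * a x f"
    and ls_algebroid_anchor_add_fun: "a x (f + g) = a x f + a x g"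
    and ls_algebroid_anchor_mult_fun: "a x (f * g) = a x f * g + f * a x g"
  using assms unfolding ls_algebroid_def by (simp_all del: of_real_divide)

lemma half_anchor_double:
  assumes "ls_algebroid sm m a"
  shows "of_real (1/2) * a x (p + p) = a x p"
proof -
  have "of_real (1/2) * a x (p + p) = of_real (1/2 + 1/2) * a x p"
    by (simp only: ls_algebroid_anchor_add_fun[OF assms] distrib_left distrib_right of_real_add)
  then show ?thesis by simp
qed

locale paired_ls_algebroids =
  fixes S :: "('f::{comm_ring_1,real_algebra_1}, 'a::ab_group_add, 'b::ab_group_add) lsb_data"
  assumes dual: "dual_pairing S"
    and ls_A: "ls_algebroid (smA S) (mulA S) (ancA S)"
    and ls_B: "ls_algebroid (smB S) (mulB S) (ancB S)"
begin

lemma dpair_add_left: "dpair S (\<xi> + \<eta>) x = dpair S \<xi> x + dpair S \<eta> x"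
  using dual unfolding dual_pairing_def by (elim conjE) (erule allE)+

lemma dpair_add_right: "dpair S \<xi> (x + y) = dpair S \<xi> x + dpair S \<xi> y"
  using dual unfolding dual_pairing_def by (elim conjE) (erule allE)+

lemma dpair_scale_left: "dpair S (smB S f \<xi>) x = f * dpair S \<xi> x"
  using dual unfolding dual_pairing_def by (elim conjE) (erule allE)+

lemma dpair_scale_right: "dpair S \<xi> (smA S f x) = f * dpair S \<xi> x"
  using dual unfolding dual_pairing_def by (elim conjE) (erule allE)+

lemma sectionA_eq_zeroI: "(\<And>\<xi>. dpair S \<xi> x = 0) \<Longrightarrow> x = 0"
  using dual unfolding dual_pairing_def by (elim conjE) (erule allE, erule mp, simp)

lemma repA_pair:
  assumes "flinear (smB S) \<psi>"
  shows "dpair S \<xi> (repA S \<psi>) = \<psi> \<xi>"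
proof -
  have "\<exists>x. \<forall>\<xi>. dpair S \<xi> x = \<psi> \<xi>"
    using dual assms unfolding dual_pairing_def by (elim conjE) (erule allE, erule mp)
  then show ?thesis unfolding repA_def by (rule someI_ex[THEN spec])
qed

lemma repB_pair:
  assumes "flinear (smA S) \<phi>"
  shows "dpair S (repB S \<phi>) x = \<phi> x"
proof -
  have "\<exists>\<xi>. \<forall>x. dpair S \<xi> x = \<phi> x"
    using dual assms unfolding dual_pairing_def by (elim conjE) (erule allE, erule mp)
  then show ?thesis unfolding repB_def by (rule someI_ex[THEN spec])
qed

lemma dpair_diff_left: "dpair S (\<xi> - \<eta>) x = dpair S \<xi> x - dpair S \<eta> x"
  using dpair_add_left[of "\<xi> - \<eta>" \<eta> x] by (simp add: eq_diff_eq)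

lemma dpair_diff_right: "dpair S \<xi> (x - y) = dpair S \<xi> x - dpair S \<xi> y"
  using dpair_add_right[of \<xi> "x - y" y] by (simp add: eq_diff_eq)

lemma dpair_zero_left: "dpair S 0 x = 0"
  using dpair_diff_left[of 0 0 x] by simp

lemma sectionA_eqI:
  assumes "\<And>\<xi>. dpair S \<xi> x = dpair S \<xi> y"
  shows "x = y"
proof -
  have "x - y = 0"
    by (rule sectionA_eq_zeroI) (simp add: dpair_diff_right assms)
  then show ?thesis by simp
qed

lemma LieB_pair: "dpair S \<eta> (LieB S \<xi> x) = ancB S \<xi> (dpair S \<eta> x) - dpair S (brB S \<xi> \<eta>) x"
  unfolding LieB_def
  by (rule repA_pair) (auto simp: flinear_def brB_def dpair_add_left dpair_diff_left
      dpair_scale_left ls_algebroidD[OF ls_B] algebra_simps)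

lemma LieA_pair: "dpair S (LieA S x \<xi>) y = ancA S x (dpair S \<xi> y) - dpair S \<xi> (brA S x y)"
  unfolding LieA_def
  by (rule repB_pair) (auto simp: flinear_def brA_def dpair_add_right dpair_diff_right
      dpair_scale_right ls_algebroidD[OF ls_A] algebra_simps)

lemma RB_pair: "dpair S \<eta> (RB S \<xi> x) = - dpair S (mulB S \<eta> \<xi>) x"
  unfolding RB_def
  by (rule repA_pair) (auto simp: flinear_def dpair_add_left dpair_scale_left
      ls_algebroidD[OF ls_B])

lemma RA_pair: "dpair S (RA S x \<xi>) y = - dpair S \<xi> (mulA S y x)"
  unfolding RA_def
  by (rule repB_pair) (auto simp: flinear_def dpair_add_right dpair_scale_right
      ls_algebroidD[OF ls_A])

lemma dB_pair: "dpair S \<eta> (dB S f) = ancB S \<eta> f"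
  unfolding dB_def by (rule repA_pair) (auto simp: flinear_def ls_algebroidD[OF ls_B])

lemma dA_pair: "dpair S (dA S f) x = ancA S x f"
  unfolding dA_def by (rule repB_pair) (auto simp: flinear_def ls_algebroidD[OF ls_A])

lemma star_fst_pair:
  "dpair S \<theta> (fst (star S (x, \<xi>) (y, \<eta>))) =
     dpair S \<theta> (mulA S x y) + ancB S \<xi> (dpair S \<theta> y) - dpair S (brB S \<xi> \<theta>) y
     + dpair S (mulB S \<theta> \<eta>) x - of_real (1/2) * ancB S \<theta> (pform_plus S (x, \<xi>) (y, \<eta>))"
  by (simp add: star_def dpair_diff_right dpair_add_right LieB_pair RB_pair dpair_scale_right
      dB_pair)

lemma star_snd_pair:
  "dpair S (snd (star S (x, \<xi>) (y, \<eta>))) z =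
     dpair S (mulB S \<xi> \<eta>) z + ancA S x (dpair S \<eta> z) - dpair S \<eta> (brA S x z)
     + dpair S \<xi> (mulA S z y) - of_real (1/2) * ancA S z (pform_plus S (x, \<xi>) (y, \<eta>))"
  by (simp add: star_def dpair_diff_left dpair_add_left LieA_pair RA_pair dpair_scale_left
      dA_pair)

end

locale paired_ls_algebroids_tensor = paired_ls_algebroids +
  fixes H :: "'b::ab_group_add \<Rightarrow> 'b \<Rightarrow> 'f::{comm_ring_1,real_algebra_1}"
  assumes tensor: "tensorAA S H"
begin

lemma hsharp_pair: "dpair S \<eta> (hsharp S H \<xi>) = H \<xi> \<eta>"
  unfolding hsharp_def by (rule repA_pair) (use tensor in \<open>simp add: tensorAA_def\<close>)

lemma hsharp_add: "hsharp S H (\<xi> + \<eta>) = hsharp S H \<xi> + hsharp S H \<eta>"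
  using tensor by (intro sectionA_eqI) (simp add: dpair_add_right hsharp_pair tensorAA_def flinear_def)

lemma hsharp_scale: "hsharp S H (smB S f \<xi>) = smA S f (hsharp S H \<xi>)"
  using tensor by (intro sectionA_eqI) (simp add: dpair_scale_right hsharp_pair tensorAA_def flinear_def)

lemma hsharp_zero: "hsharp S H 0 = 0"
  using hsharp_add[of 0 0] by simp

lemma hsharp_minus: "hsharp S H (- \<xi>) = - hsharp S H \<xi>"
  by (metis add.inverse_unique add.right_inverse hsharp_add hsharp_zero)

lemma mem_graphH_iff: "(x, \<xi>) \<in> graphH S H \<longleftrightarrow> x = hsharp S H \<xi>"
  by (auto simp: graphH_def)

lemma submod_graphH: "submod S (graphH S H)"
  unfolding submod_def graphH_def by (auto simp: hsharp_add hsharp_scale hsharp_zero)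

lemma isotropic_graphH_iff_symmetric:
  "isotropic_minus S (graphH S H) \<longleftrightarrow> (\<forall>\<xi> \<eta>. H \<xi> \<eta> = H \<eta> \<xi>)"
  by (auto simp: isotropic_minus_def graphH_def pform_minus_def hsharp_pair)

lemma max_isotropic_graphH:
  assumes "isotropic_minus S (graphH S H)"
  shows "max_isotropic_minus S (graphH S H)"
  unfolding max_isotropic_minus_def
proof (intro conjI allI impI)
  fix L assume L: "submod S L \<and> isotropic_minus S L \<and> graphH S H \<subseteq> L"
  show "L = graphH S H"
  proof
    show "L \<subseteq> graphH S H"
    proof
      fix e assume "e \<in> L"
      obtain x \<xi> where e: "e = (x, \<xi>)" by (cases e)
      have "(hsharp S H (- \<xi>), - \<xi>) \<in> L"
        using L by (auto simp: graphH_def)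
      then have vertical: "(x - hsharp S H \<xi>, 0) \<in> L"
        using L \<open>e \<in> L\<close> unfolding submod_def e by (force simp: hsharp_minus)
      have "x - hsharp S H \<xi> = 0"
      proof (rule sectionA_eq_zeroI)
        fix \<eta>
        have "(hsharp S H \<eta>, \<eta>) \<in> L" using L by (auto simp: graphH_def)
        then show "dpair S \<eta> (x - hsharp S H \<xi>) = 0"
          using L vertical by (force simp: isotropic_minus_def pform_minus_def dpair_zero_left)
      qed
      then show "e \<in> graphH S H" by (simp add: e mem_graphH_iff)
    qed
  qed (use L in blast)
qed (use assms submod_graphH in auto)

context
  assumes symmetric: "\<And>\<xi> \<eta>. H \<xi> \<eta> = H \<eta> \<xi>"
begin

lemma mem_graphH_iff_pairing:
  "e \<in> graphH S H \<longleftrightarrow> (\<forall>\<theta>. dpair S \<theta> (fst e) - dpair S (snd e) (hsharp S H \<theta>) = 0)"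
proof -
  have "dpair S \<theta> (hsharp S H (snd e)) = dpair S (snd e) (hsharp S H \<theta>)" for \<theta>
    by (simp add: hsharp_pair symmetric)
  then show ?thesis
    by (cases e) (auto simp: mem_graphH_iff intro: sectionA_eqI)
qed

lemma star_graphH_defect:
  "dpair S \<theta> (fst (star S (hsharp S H \<xi>, \<xi>) (hsharp S H \<eta>, \<eta>)))
     - dpair S (snd (star S (hsharp S H \<xi>, \<xi>) (hsharp S H \<eta>, \<eta>))) (hsharp S H \<theta>)
   = cobB2 S H \<xi> \<theta> \<eta> - bigbrHH S H \<xi> \<theta> \<eta>"
proof -
  let ?x = "hsharp S H \<xi>" and ?y = "hsharp S H \<eta>" and ?z = "hsharp S H \<theta>"
  have pform: "pform_plus S (?x, \<xi>) (?y, \<eta>) = H \<xi> \<eta> + H \<xi> \<eta>"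
    by (simp add: pform_plus_def hsharp_pair symmetric[of \<eta> \<xi>])
  have fst_part: "dpair S \<theta> (fst (star S (?x, \<xi>) (?y, \<eta>))) =
      dpair S \<theta> (mulA S ?x ?y) + ancB S \<xi> (H \<theta> \<eta>) - H (brB S \<xi> \<theta>) \<eta>
      + H \<xi> (mulB S \<theta> \<eta>) - ancB S \<theta> (H \<xi> \<eta>)"
    unfolding star_fst_pair pform half_anchor_double[OF ls_B]
    by (simp only: hsharp_pair symmetric[of \<eta>])
  have snd_part: "dpair S (snd (star S (?x, \<xi>) (?y, \<eta>))) ?z =
      H \<theta> (mulB S \<xi> \<eta>) + ancA S ?x (H \<theta> \<eta>) - dpair S \<eta> (brA S ?x ?z)
      + dpair S \<xi> (mulA S ?z ?y) - ancA S ?z (H \<xi> \<eta>)"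
    unfolding star_snd_pair pform half_anchor_double[OF ls_A] by (simp only: hsharp_pair)
  show ?thesis
    unfolding fst_part snd_part by (simp add: cobB2_def bigbrHH_def hsharp_pair algebra_simps)
qed

lemma star_closed_graphH_iff:
  "(\<forall>e1\<in>graphH S H. \<forall>e2\<in>graphH S H. star S e1 e2 \<in> graphH S H) \<longleftrightarrow>
     (\<forall>\<xi>1 \<xi>2 \<xi>3. cobB2 S H \<xi>1 \<xi>2 \<xi>3 - bigbrHH S H \<xi>1 \<xi>2 \<xi>3 = 0)"
proof -
  have "(\<forall>e1\<in>graphH S H. \<forall>e2\<in>graphH S H. star S e1 e2 \<in> graphH S H) \<longleftrightarrow>
      (\<forall>\<xi> \<eta>. star S (hsharp S H \<xi>, \<xi>) (hsharp S H \<eta>, \<eta>) \<in> graphH S H)"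
    by (auto simp: graphH_def)
  also have "\<dots> \<longleftrightarrow> (\<forall>\<xi> \<eta> \<theta>. cobB2 S H \<xi> \<theta> \<eta> - bigbrHH S H \<xi> \<theta> \<eta> = 0)"
    by (simp only: mem_graphH_iff_pairing star_graphH_defect)
  finally show ?thesis by blast
qed

end

end

theorem mainTheorem15:
  fixes S :: "('f::{comm_ring_1,real_algebra_1}, 'a::ab_group_add, 'b::ab_group_add) lsb_data"
    and H :: "'b \<Rightarrow> 'b \<Rightarrow> 'f"
  assumes "ls_bialgebroid S"
    and "tensorAA S H"
  shows "dirac S (graphH S H) \<longleftrightarrow>
           ((\<forall>\<xi> \<eta>. H \<xi> \<eta> = H \<eta> \<xi>) \<and>
            (\<forall>\<xi>1 \<xi>2 \<xi>3. cobB2 S H \<xi>1 \<xi>2 \<xi>3 - bigbrHH S H \<xi>1 \<xi>2 \<xi>3 = 0))"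
proof -
  interpret paired_ls_algebroids_tensor S H
    using assms by unfold_locales (auto simp: ls_bialgebroid_def)
  show ?thesis
    unfolding dirac_def
    using isotropic_graphH_iff_symmetric max_isotropic_graphH star_closed_graphH_iff
    by (auto simp: max_isotropic_minus_def)
qed

end
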